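(* Let $\alpha_x,\alpha_y,\alpha_z>1$ and consider the Chamon model with these dimensions. For $i=0,1,2,3$ let $C_i=\{s_i+2\lambda_x e_x^{+}+2\lambda_y e_y^{+}+2\lambda_z e_z^{+}:(\lambda_x,\lambda_y,\lambda_z)\in\mathbb Z_{\alpha_x}\times\mathbb Z_{\alpha_y}\times\mathbb Z_{\alpha_z}\}\subseteq\mathcal A\setminus\mathcal D$, where $s_0=(0,1,0)$, $s_1=(1,0,0)$, $s_2=(0,0,1)$, $s_3=(1,1,1)$. Then for every Pauli operator $E$ on the data qubits and every $i\in\{0,1,2,3\}$, the number of $s\in C_i$ such that $E$ anticommutes with $S_s$ is even.
   Context: Chamon model: let $\mathcal A=\mathbb Z_{2\alpha_x}\times\mathbb Z_{2\alpha_y}\times\mathbb Z_{2\alpha_z}$ and $\mathcal D=\{(x,y,z)\in\mathcal A: x+y+z \text{ even}\}$, one qubit per point of $\mathcal D$. With $e_x^{\pm}=(\pm1,0,0)$, $e_y^{\pm}=(0,\pm1,0)$, $e_z^{\pm}=(0,0,\pm1)$, for $s\in\mathcal A\setminus\mathcal D$ the stabilizer generator is $S_s=X_{s+e_x^+}X_{s+e_x^-}Y_{s+e_y^+}Y_{s+e_y^-}Z_{s+e_z^+}Z_{s+e_z^-}$ (single-qubit Paulis, $Y=ZX$). A stabilizer's measurement outcome is changed by an error $E$ exactly when $E$ anticommutes with it. *)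

theory Defs
  imports Main
begin

text \<open>Single-qubit Pauli operators (up to phase; Y = ZX).\<close>
datatype pauli = PI | PX | PY | PZ

definition pauli_anticomm :: "pauli \<Rightarrow> pauli \<Rightarrow> bool" where
  "pauli_anticomm P Q \<longleftrightarrow> P \<noteq> PI \<and> Q \<noteq> PI \<and> P \<noteq> Q"

type_synonym pt = "int \<times> int \<times> int"

text \<open>The lattice A = Z_{2ax} x Z_{2ay} x Z_{2az}, represented by canonical residues.\<close>
definition latA :: "nat \<Rightarrow> nat \<Rightarrow> nat \<Rightarrow> pt set" where
  "latA ax ay az = {(x,y,z). 0 \<le> x \<and> x < 2 * int ax \<and> 0 \<le> y \<and> y < 2 * int ay
                        \<and> 0 \<le> z \<and> z < 2 * int az}"

definition latD :: "nat \<Rightarrow> nat \<Rightarrow> nat \<Rightarrow> pt set" where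
  "latD ax ay az = {(x,y,z) \<in> latA ax ay az. even (x + y + z)}"

definition padd :: "nat \<Rightarrow> nat \<Rightarrow> nat \<Rightarrow> pt \<Rightarrow> pt \<Rightarrow> pt" where
  "padd ax ay az p q = ((fst p + fst q) mod (2 * int ax),
                        (fst (snd p) + fst (snd q)) mod (2 * int ay),
                        (snd (snd p) + snd (snd q)) mod (2 * int az))"

text \<open>Stabilizer S_s as a Pauli operator on the data qubits (value at each qubit).\<close>
definition stab :: "nat \<Rightarrow> nat \<Rightarrow> nat \<Rightarrow> pt \<Rightarrow> pt \<Rightarrow> pauli" where
  "stab ax ay az s q =
     (if q = padd ax ay az s (1,0,0) \<or> q = padd ax ay az s (-1,0,0) then PX
      else if q = padd ax ay az s (0,1,0) \<or> q = padd ax ay az s (0,-1,0) then PY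
      else if q = padd ax ay az s (0,0,1) \<or> q = padd ax ay az s (0,0,-1) then PZ
      else PI)"

text \<open>Two Pauli operators on the data qubits (tensor products, up to phase) anticommute
  iff they anticommute on an odd number of qubits.\<close>
definition anticommutes :: "pt set \<Rightarrow> (pt \<Rightarrow> pauli) \<Rightarrow> (pt \<Rightarrow> pauli) \<Rightarrow> bool" where
  "anticommutes Q E P \<longleftrightarrow> odd (card {q \<in> Q. pauli_anticomm (E q) (P q)})"

definition Cset :: "nat \<Rightarrow> nat \<Rightarrow> nat \<Rightarrow> pt \<Rightarrow> pt set" where
  "Cset ax ay az s0 = {padd ax ay az s0 (2 * int lx, 2 * int ly, 2 * int lz)
                        | lx ly lz. lx < ax \<and> ly < ay \<and> lz < az}"

end

theory Submission
  imports Defs "HOL-Library.Z2" "HOL-Library.Disjoint_Sets"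
begin

text \<open>Double counting. Consider the pairs (s, q) with s \<in> C_i and q a data qubit on which E
  anticommutes with S_s. The Pauli of S_s at q depends only on \<plusminus>(q - s), so the
  reflection s \<mapsto> 2q - s through q maps such a pair to another one; it preserves the parity
  class C_i, and it has no fixed points since q - s = \<plusminus>e would force 2e = 0, impossible when
  all \<alpha> > 1. Hence there is an even number of such pairs, so an even number of s \<in> C_i
  meet E in an odd number of anticommuting qubits.\<close>

lemma of_nat_bit_eq_0_iff: "(of_nat n :: bit) = 0 \<longleftrightarrow> even n"
  by (induction n) auto

lemma even_card_involution:
  assumes "\<And>x. x \<in> X \<Longrightarrow> h x \<in> X" "\<And>x. x \<in> X \<Longrightarrow> h (h x) = x"
    and "\<And>x. x \<in> X \<Longrightarrow> h x \<noteq> x"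
  shows "even (card X)"
proof -
  have "(\<Sum>x\<in>X. 1 :: bit) = 0"
    by (rule sum_involution_eq_0[where h = h]) (use assms in auto)
  then show ?thesis
    by (simp add: of_nat_bit_eq_0_iff)
qed

lemma even_card_odd_incidences:
  fixes P :: "'a \<Rightarrow> 'b \<Rightarrow> bool" and r :: "'b \<Rightarrow> 'a \<Rightarrow> 'a"
  assumes "finite C" "finite D"
    and closed: "\<And>s q. s \<in> C \<Longrightarrow> q \<in> D \<Longrightarrow> P s q \<Longrightarrow> r q s \<in> C \<and> P (r q s) q"
    and involutive: "\<And>s q. s \<in> C \<Longrightarrow> q \<in> D \<Longrightarrow> P s q \<Longrightarrow> r q (r q s) = s"
    and fixpoint_free: "\<And>s q. s \<in> C \<Longrightarrow> q \<in> D \<Longrightarrow> P s q \<Longrightarrow> r q s \<noteq> s"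
  shows "even (card {s \<in> C. odd (card {q \<in> D. P s q})})"
proof -
  have "even (card (SIGMA s:C. {q \<in> D. P s q}))"
    by (rule even_card_involution[where h = "\<lambda>(s, q). (r q s, q)"])
      (use closed involutive fixpoint_free in auto)
  then show ?thesis
    using assms(1,2) by (simp add: even_sum_iff)
qed

definition reflect :: "nat \<Rightarrow> nat \<Rightarrow> nat \<Rightarrow> pt \<Rightarrow> pt \<Rightarrow> pt" where
  "reflect ax ay az q s = ((2 * fst q - fst s) mod (2 * int ax),
                           (2 * fst (snd q) - fst (snd s)) mod (2 * int ay),
                           (2 * snd (snd q) - snd (snd s)) mod (2 * int az))"

lemma finite_latA: "finite (latA ax ay az)"
proof (rule finite_subset)
  show "latA ax ay az \<subseteq> {0..<2 * int ax} \<times> {0..<2 * int ay} \<times> {0..<2 * int az}"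
    by (auto simp: latA_def)
qed simp

lemma mod_reflect_add_iff:
  fixes q s v m :: int
  assumes "0 \<le> q" "q < m"
  shows "q = ((2 * q - s) mod m + v) mod m \<longleftrightarrow> q = (s - v) mod m"
proof -
  have "q = ((2 * q - s) mod m + v) mod m \<longleftrightarrow> q mod m = (2 * q - s + v) mod m"
    using assms by (simp add: mod_add_left_eq)
  also have "\<dots> \<longleftrightarrow> m dvd - (q - (s - v))"
    by (simp add: mod_eq_dvd_iff algebra_simps)
  also have "\<dots> \<longleftrightarrow> q mod m = (s - v) mod m"
    by (simp only: dvd_minus_iff mod_eq_dvd_iff)
  finally show ?thesis
    using assms by simp
qed

lemma padd_reflect_iff:
  assumes "q \<in> latA ax ay az"
  shows "q = padd ax ay az (reflect ax ay az q s) (vx, vy, vz) \<longleftrightarrow>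
         q = padd ax ay az s (- vx, - vy, - vz)"
  using assms by (cases q) (simp add: latA_def padd_def reflect_def mod_reflect_add_iff)

lemma stab_reflect:
  assumes "q \<in> latA ax ay az"
  shows "stab ax ay az (reflect ax ay az q s) q = stab ax ay az s q"
  unfolding stab_def padd_reflect_iff[OF assms] by auto

lemma reflect_reflect:
  assumes "s \<in> latA ax ay az"
  shows "reflect ax ay az q (reflect ax ay az q s) = s"
  using assms by (cases s) (simp add: latA_def reflect_def mod_diff_right_eq)

lemma mod_reflect_fixed_dvd:
  fixes q s v m :: int
  assumes "s = (2 * q - s) mod m" "q = (s + v) mod m"
  shows "m dvd 2 * v"
proof -
  have "m dvd 2 * q - 2 * s"
    using arg_cong[where f = "\<lambda>x. x mod m", OF assms(1)]
    by (simp add: mod_eq_dvd_iff) (metis dvd_diff_commute)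
  moreover have "m dvd q - s - v"
    using arg_cong[where f = "\<lambda>x. x mod m", OF assms(2)]
    by (simp add: mod_eq_dvd_iff diff_diff_eq)
  ultimately have "m dvd (2 * q - 2 * s) - 2 * (q - s - v)"
    by (meson dvd_diff dvd_mult)
  then show ?thesis
    by (simp add: algebra_simps)
qed

lemma reflect_fixed_dvd:
  assumes "reflect ax ay az q s = s" "q = padd ax ay az s (vx, vy, vz)"
  shows "int ax dvd vx" "int ay dvd vy" "int az dvd vz"
proof -
  obtain sx sy sz where s: "s = (sx, sy, sz)"
    by (cases s)
  have "sx = (2 * fst q - sx) mod (2 * int ax)" "fst q = (sx + vx) mod (2 * int ax)"
    "sy = (2 * fst (snd q) - sy) mod (2 * int ay)" "fst (snd q) = (sy + vy) mod (2 * int ay)"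
    "sz = (2 * snd (snd q) - sz) mod (2 * int az)" "snd (snd q) = (sz + vz) mod (2 * int az)"
    using assms unfolding s reflect_def padd_def by (auto simp: prod_eq_iff)
  then show "int ax dvd vx" "int ay dvd vy" "int az dvd vz"
    by (auto dest!: mod_reflect_fixed_dvd)
qed

lemma reflect_neq_if_stab_nonidentity:
  assumes "ax > 1" "ay > 1" "az > 1" "stab ax ay az s q \<noteq> PI"
  shows "reflect ax ay az q s \<noteq> s"
proof
  assume fixed: "reflect ax ay az q s = s"
  have "\<not> int n dvd 1" "\<not> int n dvd - 1" if "n > 1" for n
    using that by auto
  moreover have "q = padd ax ay az s (1, 0, 0) \<or> q = padd ax ay az s (- 1, 0, 0) \<or>
      q = padd ax ay az s (0, 1, 0) \<or> q = padd ax ay az s (0, - 1, 0) \<or>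
      q = padd ax ay az s (0, 0, 1) \<or> q = padd ax ay az s (0, 0, - 1)"
    using assms(4) unfolding stab_def by (auto split: if_splits)
  ultimately show False
    using assms(1-3) reflect_fixed_dvd[OF fixed] by blast
qed

lemma mod_two_coset_iff:
  fixes a x :: int
  assumes "0 \<le> a" "a \<le> 1"
  shows "(\<exists>l<n. x = (a + 2 * int l) mod (2 * int n)) \<longleftrightarrow> 0 \<le> x \<and> x < 2 * int n \<and> x mod 2 = a"
proof
  assume "\<exists>l<n. x = (a + 2 * int l) mod (2 * int n)"
  then obtain l where "l < n" "x = (a + 2 * int l) mod (2 * int n)"
    by blast
  with assms have "x = a + 2 * int l"
    by simp
  with assms \<open>l < n\<close> show "0 \<le> x \<and> x < 2 * int n \<and> x mod 2 = a"
    by auto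
next
  assume x: "0 \<le> x \<and> x < 2 * int n \<and> x mod 2 = a"
  then have "x = a + 2 * int (nat (x div 2))"
    using mult_div_mod_eq[of 2 x] by simp
  with x show "\<exists>l<n. x = (a + 2 * int l) mod (2 * int n)"
    by (intro exI[of _ "nat (x div 2)"]) auto
qed

lemma Cset_parity_class:
  assumes "0 \<le> a" "a \<le> 1" "0 \<le> b" "b \<le> 1" "0 \<le> c" "c \<le> 1"
  shows "Cset ax ay az (a, b, c) =
         {(x, y, z) \<in> latA ax ay az. x mod 2 = a \<and> y mod 2 = b \<and> z mod 2 = c}"
proof -
  have "(x, y, z) \<in> Cset ax ay az (a, b, c) \<longleftrightarrow>
        (\<exists>l<ax. x = (a + 2 * int l) mod (2 * int ax)) \<and>
        (\<exists>l<ay. y = (b + 2 * int l) mod (2 * int ay)) \<and>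
        (\<exists>l<az. z = (c + 2 * int l) mod (2 * int az))" for x y z
    by (auto simp: Cset_def padd_def)
  then show ?thesis
    unfolding mod_two_coset_iff[OF assms(1,2)] mod_two_coset_iff[OF assms(3,4)]
      mod_two_coset_iff[OF assms(5,6)]
    by (auto simp: latA_def)
qed

lemma reflect_mem_Cset:
  assumes "0 \<le> a" "a \<le> 1" "0 \<le> b" "b \<le> 1" "0 \<le> c" "c \<le> 1"
    and "s \<in> Cset ax ay az (a, b, c)"
  shows "reflect ax ay az q s \<in> Cset ax ay az (a, b, c)"
proof -
  have parity: "(2 * x - y) mod (2 * int n) mod 2 = y mod 2" for x y :: int and n
    by (simp add: mod_mod_cancel) presburger
  show ?thesis
    using assms(7) unfolding Cset_parity_class[OF assms(1-6)]
    by (auto simp: reflect_def latA_def parity)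
qed

lemma even_card_anticommuting_Cset:
  assumes "ax > 1" "ay > 1" "az > 1"
    and abc: "0 \<le> a" "a \<le> 1" "0 \<le> b" "b \<le> 1" "0 \<le> c" "c \<le> 1"
  shows "even (card {s \<in> Cset ax ay az (a, b, c).
                      anticommutes (latD ax ay az) E (stab ax ay az s)})"
proof -
  have C: "Cset ax ay az (a, b, c) \<subseteq> latA ax ay az"
    unfolding Cset_parity_class[OF abc] by auto
  have D: "latD ax ay az \<subseteq> latA ax ay az"
    by (auto simp: latD_def)
  let ?P = "\<lambda>s q. pauli_anticomm (E q) (stab ax ay az s q)"
  have "even (card {s \<in> Cset ax ay az (a, b, c). odd (card {q \<in> latD ax ay az. ?P s q})})"
  proof (rule even_card_odd_incidences[where r = "reflect ax ay az"])
    show "finite (Cset ax ay az (a, b, c))" "finite (latD ax ay az)"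
      using C D finite_latA by (auto intro: finite_subset)
    show "reflect ax ay az q s \<in> Cset ax ay az (a, b, c) \<and> ?P (reflect ax ay az q s) q"
      if "s \<in> Cset ax ay az (a, b, c)" "q \<in> latD ax ay az" "?P s q" for s q
      using that reflect_mem_Cset[OF abc] stab_reflect[OF subsetD[OF D that(2)]] by simp
    show "reflect ax ay az q (reflect ax ay az q s) = s"
      if "s \<in> Cset ax ay az (a, b, c)" for s q
      using that C reflect_reflect by blast
    show "reflect ax ay az q s \<noteq> s" if "?P s q" for s q
      using that assms(1-3) reflect_neq_if_stab_nonidentity
      unfolding pauli_anticomm_def by blast
  qed
  then show ?thesis
    unfolding anticommutes_def .
qed

theorem lemma2:
  fixes ax ay az :: nat and E :: "pt \<Rightarrow> pauli" and s0 :: pt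
  assumes "ax > 1" and "ay > 1" and "az > 1"
    and "s0 \<in> {(0,1,0), (1,0,0), (0,0,1), (1,1,1)}"
  shows "even (card {s \<in> Cset ax ay az s0.
                      anticommutes (latD ax ay az) E (stab ax ay az s)})"
proof -
  obtain a b c :: int where "s0 = (a, b, c)" "0 \<le> a" "a \<le> 1" "0 \<le> b" "b \<le> 1" "0 \<le> c" "c \<le> 1"
    using assms(4) by auto
  with even_card_anticommuting_Cset[OF assms(1-3)] show ?thesis
    by simp
qed

end
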